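(* Suppose Assumptions (A3) and (A6) hold, and let $\chi_2=e^{-\omega}+2\delta M$. Then for every $n\ge0$ and $N\ge1$, almost surely, $$\mathcal{W}_1(\mu_{n+1}^N,\mu_{n+1})\le\mathcal{W}_1(\eta_{n+1}^N,\mu_{n+1})+\delta M\sum_{k=0}^n\chi_2^{n-k}\,\mathcal{W}_1(\eta_k^N,\mu_k).$$
   Context: Setting. Fix integers $d,m\ge1$, a real $d\times d$ matrix $A$ with operator norm $\|A\|$, $\delta\ge0$, a Borel probability measure $\theta$ on $\mathbb{R}^m$, and a measurable $f:\mathbb{R}^d\times\mathcal{P}_1(\mathbb{R}^d)\times\mathbb{R}^m\to\mathbb{R}^d$. $\mathcal{P}_1(\mathbb{R}^d)$: Borel probability measures on $\mathbb{R}^d$ with finite first moment, with the Wasserstein-1 distance $\mathcal{W}_1(\mu,\nu)=\inf E|X-Y|$ over couplings. Particle system: for each $N\ge1$, $\{X_0^{i,N}\}_{i=1}^N$ are exchangeable, each with law $\mu_0\in\mathcal{P}_1(\mathbb{R}^d)$; $\{\epsilon_n^i\}_{i,n\ge1}$ i.i.d. with law $\theta$, independent of the initial conditions; $X_{n+1}^{i,N}=AX_n^{i,N}+\delta f(X_n^{i,N},\mu_n^N,\epsilon_{n+1}^i)$, $\mu_n^N=\frac1N\sum_{i=1}^N\delta_{X_n^{i,N}}$. Nonlinear evolution: $\Psi(\mu)$ is the law of $AX+\delta f(X,\mu,\epsilon)$ with $(X,\epsilon)\sim\mu\otimes\theta$, and $\mu_{n+1}=\Psi(\mu_n)$. Auxiliary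 system (same noise): $Y_0^{i,N}=X_0^{i,N}$ and $Y_{n+1}^{i,N}=AY_n^{i,N}+\delta f(Y_n^{i,N},\mu_n,\epsilon_{n+1}^i)$ for $n\ge0$, $i=1,\dots,N$; $\eta_n^N:=\frac1N\sum_{i=1}^N\delta_{Y_n^{i,N}}$. $D(z):=\sup\frac{|f(x_1,\mu_1,z)-f(x_2,\mu_2,z)|}{|x_1-x_2|+\mathcal{W}_1(\mu_1,\mu_2)}$ (supremum over $(x_1,\mu_1)\neq(x_2,\mu_2)$), $D_1(z):=|f(0,\delta_0,z)|$. (A3): $\|A\|\le e^{-\omega}$ for some $\omega>0$. (A6): (i) for some $M\in(1,\infty)$, $D(z)\le M$ for $\theta$-a.e. $z$; (ii) there is $\alpha>0$ with $\int e^{\alpha|x|}\mu_0(dx)<\infty$ and $\int e^{\alpha D_1(z)}\theta(dz)<\infty$. *)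

theory Defs
  imports "HOL-Probability.Probability"
begin

definition P1 :: "('a::euclidean_space) measure set" where
  "P1 = {\<mu>. sets \<mu> = sets borel \<and> prob_space \<mu> \<and> (\<integral>\<^sup>+ x. ennreal (norm x) \<partial>\<mu>) < \<infinity>}"

definition couplings :: "('a::euclidean_space) measure \<Rightarrow> 'a measure \<Rightarrow> ('a \<times> 'a) measure set" where
  "couplings \<mu> \<nu> = {\<pi>. sets \<pi> = sets (borel \<Otimes>\<^sub>M borel) \<and> prob_space \<pi> \<and>
      distr \<pi> borel fst = \<mu> \<and> distr \<pi> borel snd = \<nu>}"

definition W1 :: "('a::euclidean_space) measure \<Rightarrow> 'a measure \<Rightarrow> ennreal" where
  "W1 \<mu> \<nu> = (INF \<pi>\<in>couplings \<mu> \<nu>. \<integral>\<^sup>+ p. ennreal (dist (fst p) (snd p)) \<partial>\<pi>)"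

definition emp :: "nat \<Rightarrow> (nat \<Rightarrow> 'a::euclidean_space) \<Rightarrow> 'a measure" where
  "emp N x = distr (uniform_count_measure {1..N}) borel x"

definition Dlip :: "('a::euclidean_space \<Rightarrow> 'a measure \<Rightarrow> 'z \<Rightarrow> 'a) \<Rightarrow> 'z \<Rightarrow> ennreal" where
  "Dlip f z = (SUP q\<in>{(x1, \<mu>1, x2, \<mu>2). \<mu>1 \<in> P1 \<and> \<mu>2 \<in> P1 \<and> (x1, \<mu>1) \<noteq> (x2, \<mu>2)}.
      (case q of (x1, \<mu>1, x2, \<mu>2) \<Rightarrow>
        ennreal (dist (f x1 \<mu>1 z) (f x2 \<mu>2 z)) / (ennreal (dist x1 x2) + W1 \<mu>1 \<mu>2)))"

definition D1 :: "('a::euclidean_space \<Rightarrow> 'a measure \<Rightarrow> 'z \<Rightarrow> 'a) \<Rightarrow> 'z \<Rightarrow> real" where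
  "D1 f z = norm (f 0 (return borel 0) z)"

definition Psi :: "real^'d^'d \<Rightarrow> real \<Rightarrow> (real^'d \<Rightarrow> (real^'d) measure \<Rightarrow> real^'m \<Rightarrow> real^'d)
     \<Rightarrow> (real^'m) measure \<Rightarrow> (real^'d) measure \<Rightarrow> (real^'d) measure" where
  "Psi A \<delta> f \<theta> \<mu> = distr (\<mu> \<Otimes>\<^sub>M \<theta>) borel (\<lambda>(x, z). A *v x + \<delta> *\<^sub>R f x \<mu> z)"

definition nonlin :: "real^'d^'d \<Rightarrow> real \<Rightarrow> (real^'d \<Rightarrow> (real^'d) measure \<Rightarrow> real^'m \<Rightarrow> real^'d)
     \<Rightarrow> (real^'m) measure \<Rightarrow> (real^'d) measure \<Rightarrow> nat \<Rightarrow> (real^'d) measure" where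
  "nonlin A \<delta> f \<theta> \<mu>0 n = (Psi A \<delta> f \<theta> ^^ n) \<mu>0"

text \<open>Particle system X_n^{i,N}(w); X0 N i = X_0^{i,N}, eps i n = epsilon_n^i.\<close>
primrec particle :: "real^'d^'d \<Rightarrow> real \<Rightarrow> (real^'d \<Rightarrow> (real^'d) measure \<Rightarrow> real^'m \<Rightarrow> real^'d)
     \<Rightarrow> (nat \<Rightarrow> nat \<Rightarrow> 'w \<Rightarrow> real^'d) \<Rightarrow> (nat \<Rightarrow> nat \<Rightarrow> 'w \<Rightarrow> real^'m) \<Rightarrow> nat \<Rightarrow> nat
     \<Rightarrow> nat \<Rightarrow> 'w \<Rightarrow> real^'d" where
  "particle A \<delta> f X0 \<epsilon> N 0 = X0 N"
| "particle A \<delta> f X0 \<epsilon> N (Suc n) = (\<lambda>i w. A *v particle A \<delta> f X0 \<epsilon> N n i w +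
      \<delta> *\<^sub>R f (particle A \<delta> f X0 \<epsilon> N n i w) (emp N (\<lambda>j. particle A \<delta> f X0 \<epsilon> N n j w)) (\<epsilon> i (Suc n) w))"

primrec aux :: "real^'d^'d \<Rightarrow> real \<Rightarrow> (real^'d \<Rightarrow> (real^'d) measure \<Rightarrow> real^'m \<Rightarrow> real^'d)
     \<Rightarrow> (real^'m) measure \<Rightarrow> (real^'d) measure
     \<Rightarrow> (nat \<Rightarrow> nat \<Rightarrow> 'w \<Rightarrow> real^'d) \<Rightarrow> (nat \<Rightarrow> nat \<Rightarrow> 'w \<Rightarrow> real^'m) \<Rightarrow> nat \<Rightarrow> nat
     \<Rightarrow> nat \<Rightarrow> 'w \<Rightarrow> real^'d" where
  "aux A \<delta> f \<theta> \<mu>0 X0 \<epsilon> N 0 = X0 N"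
| "aux A \<delta> f \<theta> \<mu>0 X0 \<epsilon> N (Suc n) = (\<lambda>i w. A *v aux A \<delta> f \<theta> \<mu>0 X0 \<epsilon> N n i w +
      \<delta> *\<^sub>R f (aux A \<delta> f \<theta> \<mu>0 X0 \<epsilon> N n i w) (nonlin A \<delta> f \<theta> \<mu>0 n) (\<epsilon> i (Suc n) w))"

end

theory Submission
  imports Defs
begin

(* Lemma 4.8 is a pathwise estimate.  Fix an outcome w for which every noise value eps_i^k satisfies
   the Lipschitz bound D <= M; by (A6)(i) this holds almost surely.  For such w consider the mean
   distance a_k = (1/N) sum_i |X_k^i - Y_k^i| between the particle system and the auxiliary system.

   The key geometric fact is a gluing inequality for empirical measures,
     W1(emp N x, nu) <= (1/N) sum_i |x_i - y_i| + W1(emp N y, nu),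
   proved by transporting an arbitrary coupling of emp N y and nu atom by atom.  Together with the
   Lipschitz bound it yields the one-step recursion
     a_{k+1} <= (e^{-omega} + 2 delta M) a_k + delta M W1(eta_k, mu_k),   a_0 = 0,
   which a discrete Gronwall argument unrolls; one more application of the gluing inequality at
   time n+1 gives the theorem. *)

lemma sum_divide_ennreal: "(\<Sum>i\<in>A. f i / c) = (\<Sum>i\<in>A. f i) / (c::ennreal)"
  by (simp add: divide_ennreal_def sum_distrib_right)

lemma INF_const_add_ennreal:
  fixes g :: "'b \<Rightarrow> ennreal"
  shows "(INF i\<in>C. c + g i) = c + (INF i\<in>C. g i)"
proof (cases "C = {}")
  case False
  have "c + Inf (g ` C) = Inf ((\<lambda>x. c + x) ` (g ` C))"
    using continuous_at_Inf_mono[of "\<lambda>x. c + x" "g ` C"]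
    using continuous_add[of "at_right (Inf (g ` C))" "\<lambda>x. c" "\<lambda>x. x"] False
    by (auto simp: mono_def)
  then show ?thesis by (simp add: image_comp)
qed simp

(* Clearing a denominator: a bound on a quotient a / b gives a bound on a, provided b is finite
   (for b = 0 the quotient is infinite unless a = 0). *)
lemma ennreal_le_mult_of_ratio:
  fixes a b :: ennreal
  assumes ratio: "a / b \<le> ennreal M" and fin: "b \<noteq> \<top>"
  shows "a \<le> ennreal M * b"
proof (cases "b = 0")
  case True
  have "a = 0"
  proof (rule ccontr)
    assume "a \<noteq> 0"
    then have "a / b = \<top>" using True by (simp add: divide_ennreal_def ennreal_mult_top)
    with ratio show False by (simp add: top_unique)
  qed
  then show ?thesis by simp
next
  case False
  then have "a = (a / b) * b" using fin by (simp add: ennreal_divide_times top.not_eq_extremum)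
  also have "\<dots> \<le> ennreal M * b" by (rule mult_right_mono[OF ratio]) simp
  finally show ?thesis .
qed

lemma measure_eq_borel_by_indicators:
  assumes "sets M = sets borel" "sets M' = sets borel"
    and "\<And>B. B \<in> sets borel \<Longrightarrow> (\<integral>\<^sup>+x. indicator B x \<partial>M) = (\<integral>\<^sup>+x. indicator B x \<partial>M')"
  shows "M = M'"
proof (rule measure_eqI)
  fix B assume "B \<in> sets M"
  with assms show "emeasure M B = emeasure M' B"
    by (metis nn_integral_indicator)
qed (simp add: assms)

lemma nn_integral_uniform_count_measure:
  assumes "finite A"
  shows "(\<integral>\<^sup>+x. g x \<partial>uniform_count_measure A) = (\<Sum>a\<in>A. g a) / of_nat (card A)"
proof (cases "A = {}")
  case False
  then have "ennreal (1 / real (card A)) = inverse (of_nat (card A))"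
    using assms by (simp add: inverse_ennreal ennreal_of_nat_eq_real_of_nat inverse_eq_divide card_gt_0_iff)
  moreover have "(\<integral>\<^sup>+x. g x \<partial>uniform_count_measure A) = (\<Sum>a\<in>A. ennreal (1 / real (card A)) * g a)"
    unfolding uniform_count_measure_def using assms by (rule nn_integral_point_measure_finite)
  ultimately show ?thesis
    by (simp add: divide_ennreal_def sum_distrib_right mult.commute)
qed (simp add: uniform_count_measure_def nn_integral_point_measure_finite)

lemma sets_emp [simp, measurable_cong]: "sets (emp N x) = sets borel"
  by (simp add: emp_def)

lemma measurable_uniform_count_measure_iff:
  "x \<in> measurable (uniform_count_measure {1..N}) M \<longleftrightarrow> x \<in> {1..N} \<rightarrow> space M"
  by (simp add: measurable_cong_sets[OF sets_uniform_count_measure_count_space refl])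

lemma nn_integral_emp:
  assumes "g \<in> borel_measurable borel"
  shows "(\<integral>\<^sup>+z. g z \<partial>emp N x) = (\<Sum>i\<in>{1..N}. g (x i)) / of_nat N"
  unfolding emp_def using assms
  by (subst nn_integral_distr) (auto simp: measurable_uniform_count_measure_iff nn_integral_uniform_count_measure)

lemma prob_space_emp: "N \<ge> 1 \<Longrightarrow> prob_space (emp N x)"
  unfolding emp_def
  by (rule prob_space.prob_space_distr)
    (auto intro!: prob_space_uniform_count_measure simp: measurable_uniform_count_measure_iff)

lemma emp_P1:
  assumes N: "N \<ge> 1" shows "emp N x \<in> P1"
proof -
  have "(\<integral>\<^sup>+z. ennreal (norm z) \<partial>emp N x) = (\<Sum>i\<in>{1..N}. ennreal (norm (x i))) / of_nat N"
    by (rule nn_integral_emp) measurable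
  also have "\<dots> < \<infinity>"
    using N by (simp add: ennreal_divide_eq_top_iff less_top[symmetric])
  finally show ?thesis
    using prob_space_emp[OF N] by (simp add: P1_def)
qed

lemma fst_borel [measurable]: "fst \<in> borel_measurable (borel :: ('a::euclidean_space \<times> 'b::euclidean_space) measure)"
  using measurable_fst[of "borel::'a measure" "borel::'b measure"] by (simp add: borel_prod)

lemma snd_borel [measurable]: "snd \<in> borel_measurable (borel :: ('a::euclidean_space \<times> 'b::euclidean_space) measure)"
  using measurable_snd[of "borel::'a measure" "borel::'b measure"] by (simp add: borel_prod)

lemma couplingsD:
  assumes "\<pi> \<in> couplings \<mu> \<nu>"
  shows "sets \<pi> = sets borel" "prob_space \<pi>" "distr \<pi> borel fst = \<mu>" "distr \<pi> borel snd = \<nu>"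
  using assms unfolding couplings_def borel_prod by simp_all

lemma coupling_measurable_fst_snd:
  assumes "\<pi> \<in> couplings \<mu> \<nu>"
  shows "fst \<in> borel_measurable \<pi>" "snd \<in> borel_measurable \<pi>"
  by (simp_all add: measurable_cong_sets[OF couplingsD(1)[OF assms] refl])

lemma coupling_nn_integral_fst:
  assumes \<pi>: "\<pi> \<in> couplings \<mu> \<nu>" and g: "g \<in> borel_measurable borel"
  shows "(\<integral>\<^sup>+p. g (fst p) \<partial>\<pi>) = (\<integral>\<^sup>+x. g x \<partial>\<mu>)"
proof -
  have "(\<integral>\<^sup>+x. g x \<partial>distr \<pi> borel fst) = (\<integral>\<^sup>+p. g (fst p) \<partial>\<pi>)"
    using coupling_measurable_fst_snd[OF \<pi>] g by (intro nn_integral_distr) simp_all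
  then show ?thesis by (simp only: couplingsD(3)[OF \<pi>])
qed

lemma coupling_nn_integral_snd:
  assumes \<pi>: "\<pi> \<in> couplings \<mu> \<nu>" and g: "g \<in> borel_measurable borel"
  shows "(\<integral>\<^sup>+p. g (snd p) \<partial>\<pi>) = (\<integral>\<^sup>+x. g x \<partial>\<nu>)"
proof -
  have "(\<integral>\<^sup>+x. g x \<partial>distr \<pi> borel snd) = (\<integral>\<^sup>+p. g (snd p) \<partial>\<pi>)"
    using coupling_measurable_fst_snd[OF \<pi>] g by (intro nn_integral_distr) simp_all
  then show ?thesis by (simp only: couplingsD(4)[OF \<pi>])
qed

definition transport_cost :: "('a::euclidean_space \<times> 'a) measure \<Rightarrow> ennreal" where
  "transport_cost \<pi> = (\<integral>\<^sup>+p. ennreal (dist (fst p) (snd p)) \<partial>\<pi>)"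

lemma W1_eq_INF_cost: "W1 \<mu> \<nu> = (INF \<pi>\<in>couplings \<mu> \<nu>. transport_cost \<pi>)"
  by (simp add: W1_def transport_cost_def)

lemma W1_le_cost: "\<pi> \<in> couplings \<mu> \<nu> \<Longrightarrow> W1 \<mu> \<nu> \<le> transport_cost \<pi>"
  unfolding W1_eq_INF_cost by (rule INF_lower)

(* A measure at finite W1 distance from a measure with finite first moment has itself finite first
   moment: along a coupling of finite cost, |y| <= |x| + |x - y|.  This is what allows applying the
   Lipschitz bound of f (whose supremum only ranges over P1) without knowing a priori that the
   deterministic laws mu_n have finite first moment. *)
lemma W1_finite_imp_P1:
  assumes \<mu>: "\<mu> \<in> P1" and fin: "W1 \<mu> \<nu> < \<infinity>"
  shows "\<nu> \<in> P1"
proof -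
  obtain \<pi> where \<pi>: "\<pi> \<in> couplings \<mu> \<nu>" and cost: "transport_cost \<pi> < \<infinity>"
    using fin unfolding W1_eq_INF_cost by (auto simp: INF_less_iff)
  note [measurable] = coupling_measurable_fst_snd[OF \<pi>]
  have moment_\<mu>: "(\<integral>\<^sup>+x. ennreal (norm x) \<partial>\<mu>) < \<infinity>" using \<mu> by (simp add: P1_def)
  have "(\<integral>\<^sup>+y. ennreal (norm y) \<partial>\<nu>) = (\<integral>\<^sup>+p. ennreal (norm (snd p)) \<partial>\<pi>)"
    by (rule coupling_nn_integral_snd[OF \<pi>, symmetric]) measurable
  also have "\<dots> \<le> (\<integral>\<^sup>+p. ennreal (norm (fst p)) + ennreal (dist (fst p) (snd p)) \<partial>\<pi>)"
  proof (intro nn_integral_mono)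
    fix p :: "'a \<times> 'a"
    have "norm (snd p) \<le> norm (fst p) + dist (fst p) (snd p)"
      using norm_triangle_ineq2[of "snd p" "fst p"] by (simp add: dist_norm norm_minus_commute)
    then show "ennreal (norm (snd p)) \<le> ennreal (norm (fst p)) + ennreal (dist (fst p) (snd p))"
      by (simp add: ennreal_plus[symmetric] del: ennreal_plus)
  qed
  also have "\<dots> = (\<integral>\<^sup>+x. ennreal (norm x) \<partial>\<mu>) + transport_cost \<pi>"
    using coupling_nn_integral_fst[OF \<pi>, of "\<lambda>x. ennreal (norm x)"]
    by (simp add: nn_integral_add transport_cost_def)
  also have "\<dots> < \<infinity>" using moment_\<mu> cost by simp
  finally have "(\<integral>\<^sup>+y. ennreal (norm y) \<partial>\<nu>) < \<infinity>" .
  moreover have "sets \<nu> = sets borel"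
    by (simp flip: couplingsD(4)[OF \<pi>])
  moreover have "prob_space \<nu>"
    unfolding couplingsD(4)[OF \<pi>, symmetric]
    by (rule prob_space.prob_space_distr[OF couplingsD(2) coupling_measurable_fst_snd(2)]) (rule \<pi>)+
  ultimately show ?thesis unfolding P1_def by blast
qed

definition mean_dist :: "nat \<Rightarrow> (nat \<Rightarrow> 'a::metric_space) \<Rightarrow> (nat \<Rightarrow> 'a) \<Rightarrow> ennreal" where
  "mean_dist N x y = (\<Sum>i\<in>{1..N}. ennreal (dist (x i) (y i))) / of_nat N"

(* Let pi couple emp N y with nu.  Conditioning pi on its first coordinate being y_j and
   moving that first coordinate to x_j gives, after averaging over j, a coupling of emp N x with nu.
   Since the points y_j may coincide, the atom y_j carries mass atom_multiplicity / N, and the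
   conditioning is done by the weight glue_weight N y j (fst p), which is the indicator of
   fst p = y_j divided by that multiplicity. *)
definition atom_multiplicity :: "nat \<Rightarrow> (nat \<Rightarrow> 'a) \<Rightarrow> 'a \<Rightarrow> nat" where
  "atom_multiplicity N y a = card {i\<in>{1..N}. y i = a}"

definition glue_weight :: "nat \<Rightarrow> (nat \<Rightarrow> 'a) \<Rightarrow> nat \<Rightarrow> 'a \<Rightarrow> ennreal" where
  "glue_weight N y j a = inverse (of_nat (atom_multiplicity N y (y j))) * indicator {y j} a"

lemma sum_inverse_atom_multiplicity:
  assumes "a \<in> y ` {1..N}"
  shows "(\<Sum>i\<in>{1..N}. if y i = a then inverse (of_nat (atom_multiplicity N y a)) else 0) = (1::ennreal)"
proof -
  have pos: "atom_multiplicity N y a > 0"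
    using assms by (auto simp: atom_multiplicity_def card_gt_0_iff)
  have "(\<Sum>i\<in>{1..N}. if y i = a then inverse (of_nat (atom_multiplicity N y a)) else 0)
      = of_nat (atom_multiplicity N y a) * (inverse (of_nat (atom_multiplicity N y a)) :: ennreal)"
    by (simp add: sum.inter_filter[symmetric] atom_multiplicity_def)
  also have "\<dots> = 1"
    using pos by (simp add: ennreal_of_nat_eq_real_of_nat inverse_ennreal ennreal_mult[symmetric])
  finally show ?thesis .
qed

lemma glue_weight_sum:
  assumes "a \<in> y ` {1..N}"
  shows "(\<Sum>j\<in>{1..N}. glue_weight N y j a) = 1"
proof -
  have "glue_weight N y j a = (if y j = a then inverse (of_nat (atom_multiplicity N y a)) else 0)" for j
    by (auto simp: glue_weight_def)
  then show ?thesis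
    using sum_inverse_atom_multiplicity[OF assms] by simp
qed

lemma glue_weight_measurable [measurable]:
  "glue_weight N y j \<in> borel_measurable (borel :: 'a::euclidean_space measure)"
  unfolding glue_weight_def by (intro borel_measurable_times_ennreal borel_measurable_const
      borel_measurable_indicator) simp

lemma nn_integral_glue_weight_emp:
  assumes "j \<in> {1..N}"
  shows "(\<integral>\<^sup>+a. glue_weight N y j a \<partial>emp N y) = 1 / of_nat N"
proof -
  have "glue_weight N y j (y i) = (if y i = y j then inverse (of_nat (atom_multiplicity N y (y j))) else 0)" for i
    by (simp add: glue_weight_def)
  then show ?thesis
    using sum_inverse_atom_multiplicity[of "y j" y N] assms by (simp add: nn_integral_emp)
qed

lemma coupling_emp_AE_atoms:
  assumes \<pi>: "\<pi> \<in> couplings (emp N y) \<nu>"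
  shows "AE p in \<pi>. fst p \<in> y ` {1..N}"
proof -
  have Y: "- (y ` {1..N}) \<in> sets borel"
    by (intro borel_open) (auto intro!: finite_imp_closed)
  have meas: "(\<lambda>p. indicator (- (y ` {1..N})) (fst p)) \<in> borel_measurable \<pi>"
    using coupling_measurable_fst_snd(1)[OF \<pi>] Y by measurable
  have "(\<integral>\<^sup>+p. indicator (- (y ` {1..N})) (fst p) \<partial>\<pi>) = (\<integral>\<^sup>+a. indicator (- (y ` {1..N})) a \<partial>emp N y)"
    by (rule coupling_nn_integral_fst[OF \<pi>]) (rule borel_measurable_indicator[OF Y])
  also have "\<dots> = 0"
    unfolding nn_integral_emp[OF borel_measurable_indicator[OF Y]] by simp
  finally have "AE p in \<pi>. indicator (- (y ` {1..N})) (fst p) = (0::ennreal)"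
    unfolding nn_integral_0_iff_AE[OF meas] .
  then show ?thesis
    by (rule eventually_mono) (auto simp: indicator_def split: if_splits)
qed

definition glue_coupling ::
    "nat \<Rightarrow> (nat \<Rightarrow> 'a::euclidean_space) \<Rightarrow> (nat \<Rightarrow> 'a) \<Rightarrow> ('a \<times> 'a) measure \<Rightarrow> ('a \<times> 'a) measure" where
  "glue_coupling N x y \<pi> = distr (density (count_space {1..N} \<Otimes>\<^sub>M \<pi>) (\<lambda>(j, p). glue_weight N y j (fst p)))
     borel (\<lambda>(j, p). (x j, snd p))"

lemma nn_integral_glue_coupling:
  assumes \<pi>: "\<pi> \<in> couplings (emp N y) \<nu>" and h: "h \<in> borel_measurable borel"
  shows "(\<integral>\<^sup>+q. h q \<partial>glue_coupling N x y \<pi>)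
       = (\<Sum>j\<in>{1..N}. \<integral>\<^sup>+p. glue_weight N y j (fst p) * h (x j, snd p) \<partial>\<pi>)"
proof -
  interpret \<pi>: prob_space \<pi> using couplingsD(2)[OF \<pi>] .
  note [measurable] = coupling_measurable_fst_snd[OF \<pi>] h
  have pair [measurable]: "(\<lambda>p. (x j, snd p)) \<in> \<pi> \<rightarrow>\<^sub>M borel" for j
  proof -
    have "(\<lambda>p. (x j, snd p)) \<in> \<pi> \<rightarrow>\<^sub>M borel \<Otimes>\<^sub>M borel" by measurable
    then show ?thesis by (simp add: borel_prod)
  qed
  have T: "(\<lambda>(j, p). (x j, snd p)) \<in> count_space {1..N} \<Otimes>\<^sub>M \<pi> \<rightarrow>\<^sub>M borel"
    by (rule measurable_pair_measure_countable1) simp_all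
  have w: "(\<lambda>(j, p). glue_weight N y j (fst p)) \<in> borel_measurable (count_space {1..N} \<Otimes>\<^sub>M \<pi>)"
    by (rule measurable_pair_measure_countable1) simp_all
  have hT: "(\<lambda>(j, p). glue_weight N y j (fst p) * h (x j, snd p)) \<in> borel_measurable (count_space {1..N} \<Otimes>\<^sub>M \<pi>)"
    by (rule measurable_pair_measure_countable1) (simp_all add: h)
  have "(\<integral>\<^sup>+q. h q \<partial>glue_coupling N x y \<pi>)
      = (\<integral>\<^sup>+q. h ((\<lambda>(j, p). (x j, snd p)) q) \<partial>density (count_space {1..N} \<Otimes>\<^sub>M \<pi>) (\<lambda>(j, p). glue_weight N y j (fst p)))"
    unfolding glue_coupling_def
    by (rule nn_integral_distr) (simp_all only: measurable_density_eq1 T measurable_cong_sets[OF sets_distr refl] h)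
  also have "\<dots> = (\<integral>\<^sup>+q. (\<lambda>(j, p). glue_weight N y j (fst p) * h (x j, snd p)) q \<partial>(count_space {1..N} \<Otimes>\<^sub>M \<pi>))"
    by (subst nn_integral_density[OF w measurable_compose[OF T h]]) (auto intro!: nn_integral_cong)
  also have "\<dots> = (\<integral>\<^sup>+j. \<integral>\<^sup>+p. glue_weight N y j (fst p) * h (x j, snd p) \<partial>\<pi> \<partial>count_space {1..N})"
    using \<pi>.nn_integral_fst[OF hT] by simp
  also have "\<dots> = (\<Sum>j\<in>{1..N}. \<integral>\<^sup>+p. glue_weight N y j (fst p) * h (x j, snd p) \<partial>\<pi>)"
    by (rule nn_integral_count_space_finite) simp
  finally show ?thesis .
qed

lemma nn_integral_glue_weight:
  assumes \<pi>: "\<pi> \<in> couplings (emp N y) \<nu>" and j: "j \<in> {1..N}"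
  shows "(\<integral>\<^sup>+p. glue_weight N y j (fst p) * c \<partial>\<pi>) = c / of_nat N"
proof -
  note [measurable] = coupling_measurable_fst_snd[OF \<pi>]
  have "(\<integral>\<^sup>+p. glue_weight N y j (fst p) * c \<partial>\<pi>) = (\<integral>\<^sup>+p. glue_weight N y j (fst p) \<partial>\<pi>) * c"
    by (rule nn_integral_multc) measurable
  also have "(\<integral>\<^sup>+p. glue_weight N y j (fst p) \<partial>\<pi>) = 1 / of_nat N"
    using coupling_nn_integral_fst[OF \<pi> glue_weight_measurable] nn_integral_glue_weight_emp[OF j] by simp
  finally show ?thesis by (simp add: ennreal_divide_times)
qed

(* Summing the weights against any function gives back its integral against the coupling, since
   the weights form a partition of unity almost everywhere. *)
lemma sum_nn_integral_glue_weight: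
  assumes \<pi>: "\<pi> \<in> couplings (emp N y) \<nu>" and g: "g \<in> borel_measurable \<pi>"
  shows "(\<Sum>j\<in>{1..N}. \<integral>\<^sup>+p. glue_weight N y j (fst p) * g p \<partial>\<pi>) = (\<integral>\<^sup>+p. g p \<partial>\<pi>)"
proof -
  note [measurable] = coupling_measurable_fst_snd[OF \<pi>] g
  have "(\<Sum>j\<in>{1..N}. \<integral>\<^sup>+p. glue_weight N y j (fst p) * g p \<partial>\<pi>)
      = (\<integral>\<^sup>+p. (\<Sum>j\<in>{1..N}. glue_weight N y j (fst p)) * g p \<partial>\<pi>)"
    by (subst nn_integral_sum[symmetric]) (simp_all add: sum_distrib_right)
  also have "\<dots> = (\<integral>\<^sup>+p. g p \<partial>\<pi>)"
  proof (rule nn_integral_cong_AE, rule eventually_mono[OF coupling_emp_AE_atoms[OF \<pi>]])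
    fix p :: "'a \<times> 'a"
    assume "fst p \<in> y ` {1..N}"
    then have "(\<Sum>j\<in>{1..N}. glue_weight N y j (fst p)) = 1" by (rule glue_weight_sum)
    then show "(\<Sum>j\<in>{1..N}. glue_weight N y j (fst p)) * g p = g p" by simp
  qed
  finally show ?thesis .
qed

lemma glue_coupling_couplings:
  assumes N: "N \<ge> 1" and \<pi>: "\<pi> \<in> couplings (emp N y) \<nu>"
  shows "glue_coupling N x y \<pi> \<in> couplings (emp N x) \<nu>"
proof -
  let ?G = "glue_coupling N x y \<pi>"
  note [measurable] = coupling_measurable_fst_snd[OF \<pi>]
  have sets_G: "sets ?G = sets borel" by (simp add: glue_coupling_def)
  have "emeasure ?G (space ?G) = (\<integral>\<^sup>+q. 1 \<partial>?G)" by simp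
  also have "\<dots> = (\<Sum>j\<in>{1..N}. \<integral>\<^sup>+p. glue_weight N y j (fst p) * 1 \<partial>\<pi>)"
    by (rule nn_integral_glue_coupling[OF \<pi>]) simp
  also have "\<dots> = (\<Sum>j\<in>{1..N}. 1 / of_nat N)"
    by (intro sum.cong refl nn_integral_glue_weight[OF \<pi>])
  also have "\<dots> = 1" using N by (simp add: ennreal_times_divide of_nat_less_top)
  finally have prob: "prob_space ?G" by (rule prob_spaceI)
  have fst_G: "fst \<in> ?G \<rightarrow>\<^sub>M borel" and snd_G: "snd \<in> ?G \<rightarrow>\<^sub>M borel"
    by (simp_all add: measurable_cong_sets[OF sets_G refl])
  have "distr ?G borel fst = emp N x"
  proof (rule measure_eq_borel_by_indicators)
    fix B :: "'a set" assume B [measurable]: "B \<in> sets borel"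
    have "(\<integral>\<^sup>+a. indicator B a \<partial>distr ?G borel fst) = (\<integral>\<^sup>+q. indicator B (fst q) \<partial>?G)"
      by (rule nn_integral_distr[OF fst_G]) simp
    also have "\<dots> = (\<Sum>j\<in>{1..N}. \<integral>\<^sup>+p. glue_weight N y j (fst p) * indicator B (x j) \<partial>\<pi>)"
      using nn_integral_glue_coupling[OF \<pi>, of "\<lambda>q. indicator B (fst q)"] by simp
    also have "\<dots> = (\<Sum>j\<in>{1..N}. indicator B (x j) / of_nat N)"
      by (intro sum.cong refl nn_integral_glue_weight[OF \<pi>])
    also have "\<dots> = (\<integral>\<^sup>+a. indicator B a \<partial>emp N x)"
      by (simp only: sum_divide_ennreal nn_integral_emp[OF borel_measurable_indicator[OF B]])
    finally show "(\<integral>\<^sup>+a. indicator B a \<partial>distr ?G borel fst) = (\<integral>\<^sup>+a. indicator B a \<partial>emp N x)" .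
  qed simp_all
  moreover have "distr ?G borel snd = \<nu>"
  proof (rule measure_eq_borel_by_indicators)
    fix B :: "'a set" assume B [measurable]: "B \<in> sets borel"
    have "(\<integral>\<^sup>+a. indicator B a \<partial>distr ?G borel snd) = (\<integral>\<^sup>+q. indicator B (snd q) \<partial>?G)"
      by (rule nn_integral_distr[OF snd_G]) simp
    also have "\<dots> = (\<Sum>j\<in>{1..N}. \<integral>\<^sup>+p. glue_weight N y j (fst p) * indicator B (snd p) \<partial>\<pi>)"
      using nn_integral_glue_coupling[OF \<pi>, of "\<lambda>q. indicator B (snd q)"] by simp
    also have "\<dots> = (\<integral>\<^sup>+p. indicator B (snd p) \<partial>\<pi>)"
      by (rule sum_nn_integral_glue_weight[OF \<pi>]) measurable
    also have "\<dots> = (\<integral>\<^sup>+a. indicator B a \<partial>\<nu>)"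
      by (rule coupling_nn_integral_snd[OF \<pi>]) measurable
    finally show "(\<integral>\<^sup>+a. indicator B a \<partial>distr ?G borel snd) = (\<integral>\<^sup>+a. indicator B a \<partial>\<nu>)" .
  qed (simp_all add: couplingsD(4)[OF \<pi>, symmetric])
  ultimately show ?thesis
    using sets_G prob unfolding couplings_def borel_prod by blast
qed

(* Its cost exceeds that of pi by at most the mean distance of x and y (triangle inequality on
   each atom). *)
lemma transport_cost_glue_coupling:
  assumes \<pi>: "\<pi> \<in> couplings (emp N y) \<nu>"
  shows "transport_cost (glue_coupling N x y \<pi>) \<le> mean_dist N x y + transport_cost \<pi>"
proof -
  note [measurable] = coupling_measurable_fst_snd[OF \<pi>]
  let ?w = "\<lambda>j p. glue_weight N y j (fst p)"
  have triangle: "?w j p * ennreal (dist (x j) (snd p))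
      \<le> ?w j p * ennreal (dist (x j) (y j)) + ?w j p * ennreal (dist (fst p) (snd p))" for j p
  proof (cases "fst p = y j")
    case True
    then have "ennreal (dist (x j) (snd p)) \<le> ennreal (dist (x j) (y j)) + ennreal (dist (fst p) (snd p))"
      by (simp add: dist_triangle ennreal_plus[symmetric] del: ennreal_plus)
    then show ?thesis by (simp add: distrib_left[symmetric] mult_left_mono)
  qed (simp add: glue_weight_def)
  have "transport_cost (glue_coupling N x y \<pi>)
      = (\<Sum>j\<in>{1..N}. \<integral>\<^sup>+p. ?w j p * ennreal (dist (x j) (snd p)) \<partial>\<pi>)"
    unfolding transport_cost_def
    using nn_integral_glue_coupling[OF \<pi>, of "\<lambda>q. ennreal (dist (fst q) (snd q))"] by simp
  also have "\<dots> \<le> (\<Sum>j\<in>{1..N}. \<integral>\<^sup>+p. ?w j p * ennreal (dist (x j) (y j)) + ?w j p * ennreal (dist (fst p) (snd p)) \<partial>\<pi>)"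
    by (intro sum_mono nn_integral_mono triangle)
  also have "\<dots> = (\<Sum>j\<in>{1..N}. ennreal (dist (x j) (y j)) / of_nat N)
      + (\<Sum>j\<in>{1..N}. \<integral>\<^sup>+p. ?w j p * ennreal (dist (fst p) (snd p)) \<partial>\<pi>)"
    by (simp add: nn_integral_add sum.distrib nn_integral_glue_weight[OF \<pi>])
  also have "\<dots> = mean_dist N x y + transport_cost \<pi>"
    unfolding mean_dist_def transport_cost_def sum_divide_ennreal
    by (subst sum_nn_integral_glue_weight[OF \<pi>]) simp_all
  finally show ?thesis .
qed

lemma W1_emp_triangle:
  assumes N: "N \<ge> 1"
  shows "W1 (emp N x) \<nu> \<le> mean_dist N x y + W1 (emp N y) \<nu>"
proof -
  have "W1 (emp N x) \<nu> \<le> (INF \<pi>\<in>couplings (emp N y) \<nu>. mean_dist N x y + transport_cost \<pi>)"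
  proof (rule INF_greatest)
    fix \<pi> assume \<pi>: "\<pi> \<in> couplings (emp N y) \<nu>"
    have "W1 (emp N x) \<nu> \<le> transport_cost (glue_coupling N x y \<pi>)"
      by (rule W1_le_cost[OF glue_coupling_couplings[OF N \<pi>]])
    also have "\<dots> \<le> mean_dist N x y + transport_cost \<pi>"
      by (rule transport_cost_glue_coupling[OF \<pi>])
    finally show "W1 (emp N x) \<nu> \<le> mean_dist N x y + transport_cost \<pi>" .
  qed
  also have "\<dots> = mean_dist N x y + W1 (emp N y) \<nu>"
    unfolding W1_eq_INF_cost by (rule INF_const_add_ennreal)
  finally show ?thesis .
qed

(* The Lipschitz bound encoded by Dlip f z <= M, for any first measure in P1 and any second measure:
   if W1 is infinite the bound is trivial, otherwise the second measure is in P1 as well. *)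
lemma Dlip_bound:
  fixes f :: "'a::euclidean_space \<Rightarrow> 'a measure \<Rightarrow> 'z \<Rightarrow> 'a"
  assumes D: "Dlip f z \<le> ennreal M" and M: "M > 0" and \<mu>1: "\<mu>1 \<in> P1"
  shows "ennreal (dist (f x1 \<mu>1 z) (f x2 \<mu>2 z)) \<le> ennreal M * (ennreal (dist x1 x2) + W1 \<mu>1 \<mu>2)"
proof (cases "(x1, \<mu>1) = (x2, \<mu>2)")
  case distinct: False
  show ?thesis
  proof (cases "W1 \<mu>1 \<mu>2 = \<top>")
    case True
    then show ?thesis using M by (simp add: ennreal_mult_top)
  next
    case False
    then have \<mu>2: "\<mu>2 \<in> P1" using W1_finite_imp_P1[OF \<mu>1] by (simp add: top.not_eq_extremum)
    have "ennreal (dist (f x1 \<mu>1 z) (f x2 \<mu>2 z)) / (ennreal (dist x1 x2) + W1 \<mu>1 \<mu>2) \<le> Dlip f z"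
      unfolding Dlip_def
      by (rule SUP_upper2[of "(x1, \<mu>1, x2, \<mu>2)"]) (use distinct \<mu>1 \<mu>2 in auto)
    with D show ?thesis
      by (intro ennreal_le_mult_of_ratio) (use False in auto)
  qed
qed simp

lemma average_affine_ennreal:
  fixes d :: "nat \<Rightarrow> ennreal"
  assumes N: "N \<ge> 1"
  shows "(\<Sum>i\<in>{1..N}. A * d i + B) / of_nat N = A * ((\<Sum>i\<in>{1..N}. d i) / of_nat N) + B"
proof -
  have "(\<Sum>i\<in>{1..N}. A * d i + B) = A * (\<Sum>i\<in>{1..N}. d i) + B * of_nat N"
    by (simp add: sum.distrib sum_distrib_left mult.commute)
  moreover have "B * of_nat N / of_nat N = B"
    using N by (intro ennreal_mult_divide_eq) simp_all
  ultimately show ?thesis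
    by (simp add: add_divide_distrib_ennreal ennreal_times_divide)
qed

(* The Lipschitz bound and W1_emp_triangle give
     mean distance after <= (kappa + 2 delta M) * mean distance before + delta M * W1(emp N y, nu). *)
lemma mean_dist_step:
  fixes L :: "'a::euclidean_space \<Rightarrow> 'a" and f :: "'a \<Rightarrow> 'a measure \<Rightarrow> 'z \<Rightarrow> 'a"
  assumes N: "N \<ge> 1" and L: "linear L" "\<And>v. norm (L v) \<le> \<kappa> * norm v" "\<kappa> \<ge> 0"
    and \<delta>: "\<delta> \<ge> 0" and M: "M > 0" and D: "\<And>i. i \<in> {1..N} \<Longrightarrow> Dlip f (z i) \<le> ennreal M"
  shows "mean_dist N (\<lambda>i. L (x i) + \<delta> *\<^sub>R f (x i) (emp N x) (z i)) (\<lambda>i. L (y i) + \<delta> *\<^sub>R f (y i) \<nu> (z i))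
    \<le> ennreal (\<kappa> + 2 * \<delta> * M) * mean_dist N x y + ennreal (\<delta> * M) * W1 (emp N y) \<nu>"
proof -
  define W where "W = W1 (emp N x) \<nu>"
  have pointwise: "ennreal (dist (L (x i) + \<delta> *\<^sub>R f (x i) (emp N x) (z i)) (L (y i) + \<delta> *\<^sub>R f (y i) \<nu> (z i)))
      \<le> ennreal (\<kappa> + \<delta> * M) * ennreal (dist (x i) (y i)) + ennreal (\<delta> * M) * W" if i: "i \<in> {1..N}" for i
  proof -
    let ?u = "f (x i) (emp N x) (z i)" and ?v = "f (y i) \<nu> (z i)"
    have "dist (L (x i) + \<delta> *\<^sub>R ?u) (L (y i) + \<delta> *\<^sub>R ?v) = norm (L (x i - y i) + \<delta> *\<^sub>R (?u - ?v))"
      by (simp add: dist_norm linear_diff[OF L(1)] algebra_simps)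
    also have "\<dots> \<le> \<kappa> * dist (x i) (y i) + \<delta> * dist ?u ?v"
      using norm_triangle_ineq[of "L (x i - y i)" "\<delta> *\<^sub>R (?u - ?v)"] L(2)[of "x i - y i"] \<delta>
      by (simp add: dist_norm)
    finally have "ennreal (dist (L (x i) + \<delta> *\<^sub>R ?u) (L (y i) + \<delta> *\<^sub>R ?v))
        \<le> ennreal \<kappa> * ennreal (dist (x i) (y i)) + ennreal \<delta> * ennreal (dist ?u ?v)"
      using L(3) \<delta> by (simp add: ennreal_plus[symmetric] ennreal_mult[symmetric] del: ennreal_plus)
    also have "ennreal (dist ?u ?v) \<le> ennreal M * (ennreal (dist (x i) (y i)) + W)"
      unfolding W_def by (rule Dlip_bound[OF D[OF i] M emp_P1[OF N]])
    finally show ?thesis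
      using L(3) \<delta> M by (simp add: ennreal_plus ennreal_mult mult_left_mono add_mono distrib_left
          distrib_right mult.assoc add.assoc)
  qed
  have "mean_dist N (\<lambda>i. L (x i) + \<delta> *\<^sub>R f (x i) (emp N x) (z i)) (\<lambda>i. L (y i) + \<delta> *\<^sub>R f (y i) \<nu> (z i))
      \<le> (\<Sum>i\<in>{1..N}. ennreal (\<kappa> + \<delta> * M) * ennreal (dist (x i) (y i)) + ennreal (\<delta> * M) * W) / of_nat N"
    unfolding mean_dist_def by (intro divide_right_mono_ennreal sum_mono pointwise)
  also have "\<dots> = ennreal (\<kappa> + \<delta> * M) * mean_dist N x y + ennreal (\<delta> * M) * W"
    unfolding mean_dist_def by (rule average_affine_ennreal[OF N])
  also have "\<dots> \<le> ennreal (\<kappa> + \<delta> * M) * mean_dist N x y + ennreal (\<delta> * M) * (mean_dist N x y + W1 (emp N y) \<nu>)"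
    unfolding W_def by (intro add_left_mono mult_left_mono W1_emp_triangle[OF N]) simp
  also have "\<dots> = ennreal (\<kappa> + 2 * \<delta> * M) * mean_dist N x y + ennreal (\<delta> * M) * W1 (emp N y) \<nu>"
  proof -
    have "ennreal (\<kappa> + 2 * \<delta> * M) = ennreal (\<kappa> + \<delta> * M) + ennreal (\<delta> * M)"
      using L(3) \<delta> M by (simp add: ennreal_plus[symmetric] del: ennreal_plus)
    then show ?thesis by (simp add: algebra_simps)
  qed
  finally show ?thesis .
qed

lemma ennreal_discrete_gronwall:
  fixes a V :: "nat \<Rightarrow> ennreal"
  assumes "a 0 = 0" and step: "\<And>k. a (Suc k) \<le> c * a k + b * V k"
  shows "a n \<le> b * (\<Sum>k<n. c ^ (n - Suc k) * V k)"
proof (induction n)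
  case (Suc n)
  have "c * (\<Sum>k<n. c ^ (n - Suc k) * V k) = (\<Sum>k<n. c ^ (Suc n - Suc k) * V k)"
    unfolding sum_distrib_left
  proof (intro sum.cong refl)
    fix k assume "k \<in> {..<n}"
    then have "Suc n - Suc k = Suc (n - Suc k)" by simp
    then show "c * (c ^ (n - Suc k) * V k) = c ^ (Suc n - Suc k) * V k" by (simp add: mult.assoc)
  qed
  then have "c * (b * (\<Sum>k<n. c ^ (n - Suc k) * V k)) + b * V n = b * (\<Sum>k<Suc n. c ^ (Suc n - Suc k) * V k)"
    by (simp add: distrib_left mult.left_commute)
  moreover have "a (Suc n) \<le> c * (b * (\<Sum>k<n. c ^ (n - Suc k) * V k)) + b * V n"
    using step[of n] Suc.IH by (meson add_right_mono mult_left_mono order_trans zero_le)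
  ultimately show ?case by simp
qed (simp add: assms(1))

(* A property holding theta-almost surely holds almost surely for all the noise variables driving
   particles 1..N, at all times simultaneously (countably many events). *)
lemma AE_noise_property:
  fixes \<epsilon> :: "nat \<Rightarrow> nat \<Rightarrow> 'w \<Rightarrow> 'a::topological_space" and N :: nat
  assumes eps_meas: "\<And>i k. i \<ge> 1 \<Longrightarrow> k \<ge> 1 \<Longrightarrow> \<epsilon> i k \<in> borel_measurable P"
    and eps_law: "\<And>i k. i \<ge> 1 \<Longrightarrow> k \<ge> 1 \<Longrightarrow> distr P borel (\<epsilon> i k) = \<theta>"
    and Q: "AE z in \<theta>. Q z"
  shows "AE w in P. \<forall>k. \<forall>i\<in>{1..N}. Q (\<epsilon> i (Suc k) w)"
  unfolding AE_all_countable
proof (intro allI AE_finite_allI)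
  fix k i :: nat assume "i \<in> {1..N}"
  then have i: "i \<ge> 1" by simp
  have law: "distr P borel (\<epsilon> i (Suc k)) = \<theta>" by (rule eps_law[OF i]) simp
  have "AE z in distr P borel (\<epsilon> i (Suc k)). Q z"
    unfolding law by (rule Q)
  moreover have "\<epsilon> i (Suc k) \<in> borel_measurable P" by (rule eps_meas[OF i]) simp
  ultimately show "AE w in P. Q (\<epsilon> i (Suc k) w)"
    by (rule AE_distrD[rotated])
qed simp

lemma particle_aux_mean_dist:
  fixes A :: "real^'d^'d" and f :: "real^'d \<Rightarrow> (real^'d) measure \<Rightarrow> real^'m \<Rightarrow> real^'d"
  assumes N: "N \<ge> 1" and \<delta>: "\<delta> \<ge> 0" and M: "M > 0"
    and A: "onorm (\<lambda>x. A *v x) \<le> \<kappa>"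
    and D: "\<forall>k. \<forall>i\<in>{1..N}. Dlip f (\<epsilon> i (Suc k) w) \<le> ennreal M"
  shows "mean_dist N (\<lambda>i. particle A \<delta> f X0 \<epsilon> N n i w) (\<lambda>i. aux A \<delta> f \<theta> \<mu>0 X0 \<epsilon> N n i w)
    \<le> ennreal (\<delta> * M) * (\<Sum>k<n. ennreal (\<kappa> + 2 * \<delta> * M) ^ (n - Suc k)
         * W1 (emp N (\<lambda>i. aux A \<delta> f \<theta> \<mu>0 X0 \<epsilon> N k i w)) (nonlin A \<delta> f \<theta> \<mu>0 k))"
proof (rule ennreal_discrete_gronwall)
  have \<kappa>: "\<kappa> \<ge> 0" using onorm_pos_le[OF matrix_vector_mul_bounded_linear] A by (rule order_trans)
  have A_norm: "norm (A *v v) \<le> \<kappa> * norm v" for v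
    using onorm[OF matrix_vector_mul_bounded_linear, of A v] A
    by (meson mult_right_mono norm_ge_zero order_trans)
  show "mean_dist N (\<lambda>i. particle A \<delta> f X0 \<epsilon> N 0 i w) (\<lambda>i. aux A \<delta> f \<theta> \<mu>0 X0 \<epsilon> N 0 i w) = 0"
    by (simp add: mean_dist_def)
  fix k
  show "mean_dist N (\<lambda>i. particle A \<delta> f X0 \<epsilon> N (Suc k) i w) (\<lambda>i. aux A \<delta> f \<theta> \<mu>0 X0 \<epsilon> N (Suc k) i w)
    \<le> ennreal (\<kappa> + 2 * \<delta> * M) * mean_dist N (\<lambda>i. particle A \<delta> f X0 \<epsilon> N k i w) (\<lambda>i. aux A \<delta> f \<theta> \<mu>0 X0 \<epsilon> N k i w)
      + ennreal (\<delta> * M) * W1 (emp N (\<lambda>i. aux A \<delta> f \<theta> \<mu>0 X0 \<epsilon> N k i w)) (nonlin A \<delta> f \<theta> \<mu>0 k)"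
    unfolding particle.simps aux.simps
    by (rule mean_dist_step[OF N matrix_vector_mul_linear A_norm \<kappa> \<delta> M]) (use D in simp)
qed

lemma particle_W1_pathwise:
  fixes A :: "real^'d^'d" and f :: "real^'d \<Rightarrow> (real^'d) measure \<Rightarrow> real^'m \<Rightarrow> real^'d"
  assumes N: "N \<ge> 1" and \<delta>: "\<delta> \<ge> 0" and M: "M > 0"
    and A: "onorm (\<lambda>x. A *v x) \<le> \<kappa>"
    and D: "\<forall>k. \<forall>i\<in>{1..N}. Dlip f (\<epsilon> i (Suc k) w) \<le> ennreal M"
  shows "W1 (emp N (\<lambda>i. particle A \<delta> f X0 \<epsilon> N (Suc n) i w)) (nonlin A \<delta> f \<theta> \<mu>0 (Suc n))
    \<le> W1 (emp N (\<lambda>i. aux A \<delta> f \<theta> \<mu>0 X0 \<epsilon> N (Suc n) i w)) (nonlin A \<delta> f \<theta> \<mu>0 (Suc n))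
      + ennreal (\<delta> * M) * (\<Sum>k\<le>n. ennreal ((\<kappa> + 2 * \<delta> * M) ^ (n - k))
          * W1 (emp N (\<lambda>i. aux A \<delta> f \<theta> \<mu>0 X0 \<epsilon> N k i w)) (nonlin A \<delta> f \<theta> \<mu>0 k))"
proof -
  let ?x = "\<lambda>i. particle A \<delta> f X0 \<epsilon> N (Suc n) i w" and ?y = "\<lambda>i. aux A \<delta> f \<theta> \<mu>0 X0 \<epsilon> N (Suc n) i w"
  have \<chi>: "\<kappa> + 2 * \<delta> * M \<ge> 0"
    using order_trans[OF onorm_pos_le[OF matrix_vector_mul_bounded_linear] A] \<delta> M by simp
  have "W1 (emp N ?x) (nonlin A \<delta> f \<theta> \<mu>0 (Suc n))
      \<le> mean_dist N ?x ?y + W1 (emp N ?y) (nonlin A \<delta> f \<theta> \<mu>0 (Suc n))"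
    by (rule W1_emp_triangle[OF N])
  also have "mean_dist N ?x ?y \<le> ennreal (\<delta> * M) * (\<Sum>k\<le>n. ennreal ((\<kappa> + 2 * \<delta> * M) ^ (n - k))
          * W1 (emp N (\<lambda>i. aux A \<delta> f \<theta> \<mu>0 X0 \<epsilon> N k i w)) (nonlin A \<delta> f \<theta> \<mu>0 k))"
    using particle_aux_mean_dist[where \<epsilon> = \<epsilon> and w = w and f = f and A = A and n = "Suc n",
        OF N \<delta> M A D] \<chi>
    by (simp add: lessThan_Suc_atMost ennreal_power)
  finally show ?thesis by (simp add: add.commute add_right_mono)
qed

(* Lemma 4.8.  Almost surely all noise values satisfy D <= M (assumption (A6)(i)), and on that event
   the pathwise estimate applies with kappa = exp(-omega) (assumption (A3)).  Besides these, only
   delta >= 0, N >= 1 and the measurability and law of the noise are used. *)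
theorem lemma4p8:
  fixes A :: "real^'d^'d" and \<delta> \<omega> M \<alpha> :: real
    and \<theta> :: "(real^'m) measure" and \<mu>0 :: "(real^'d) measure"
    and f :: "real^'d \<Rightarrow> (real^'d) measure \<Rightarrow> real^'m \<Rightarrow> real^'d"
    and P :: "'w measure"
    and X0 :: "nat \<Rightarrow> nat \<Rightarrow> 'w \<Rightarrow> real^'d"
    and \<epsilon> :: "nat \<Rightarrow> nat \<Rightarrow> 'w \<Rightarrow> real^'m"
    and n N :: nat
  assumes delta: "\<delta> \<ge> 0"
    and theta: "prob_space \<theta>" "sets \<theta> = sets borel"
    and mu0: "\<mu>0 \<in> P1"
    and f_meas: "\<And>\<mu>. \<mu> \<in> P1 \<Longrightarrow> (\<lambda>(x, z). f x \<mu> z) \<in> borel_measurable (borel \<Otimes>\<^sub>M borel)"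
    and P: "prob_space P"
    and X0_meas: "\<And>N' i. N' \<ge> 1 \<Longrightarrow> i \<in> {1..N'} \<Longrightarrow> X0 N' i \<in> borel_measurable P"
    and X0_law: "\<And>N' i. N' \<ge> 1 \<Longrightarrow> i \<in> {1..N'} \<Longrightarrow> distr P borel (X0 N' i) = \<mu>0"
    and X0_exch: "\<And>N' \<sigma>. N' \<ge> 1 \<Longrightarrow> \<sigma> permutes {1..N'} \<Longrightarrow>
        distr P (PiM {1..N'} (\<lambda>_. borel)) (\<lambda>w. \<lambda>i\<in>{1..N'}. X0 N' (\<sigma> i) w)
      = distr P (PiM {1..N'} (\<lambda>_. borel)) (\<lambda>w. \<lambda>i\<in>{1..N'}. X0 N' i w)"
    and eps_meas: "\<And>i k. i \<ge> 1 \<Longrightarrow> k \<ge> 1 \<Longrightarrow> \<epsilon> i k \<in> borel_measurable P"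
    and eps_law: "\<And>i k. i \<ge> 1 \<Longrightarrow> k \<ge> 1 \<Longrightarrow> distr P borel (\<epsilon> i k) = \<theta>"
    and eps_indep: "prob_space.indep_vars P (\<lambda>_. borel) (\<lambda>(i, k). \<epsilon> i k) ({1..} \<times> {1..})"
    and eps_X0_indep: "prob_space.indep_set P
        {(\<lambda>w. \<lambda>(i, k)\<in>{1..} \<times> {1..}. \<epsilon> i k w) -` B \<inter> space P
          | B. B \<in> sets (PiM ({1..} \<times> {1..}) (\<lambda>_. borel))}
        {(\<lambda>w. \<lambda>(N', i)\<in>(SIGMA N':{1..}. {1..N'}). X0 N' i w) -` B \<inter> space P
          | B. B \<in> sets (PiM (SIGMA N':{1..}. {1..N'}) (\<lambda>_. borel))}"
    and A3: "\<omega> > 0" "onorm (\<lambda>x. A *v x) \<le> exp (- \<omega>)"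
    and A6_i: "M > 1" "AE z in \<theta>. Dlip f z \<le> ennreal M"
    and A6_ii: "\<alpha> > 0" "(\<integral>\<^sup>+ x. ennreal (exp (\<alpha> * norm x)) \<partial>\<mu>0) < \<infinity>"
       "(\<integral>\<^sup>+ z. ennreal (exp (\<alpha> * D1 f z)) \<partial>\<theta>) < \<infinity>"
    and N: "N \<ge> 1"
  shows "AE w in P.
    W1 (emp N (\<lambda>i. particle A \<delta> f X0 \<epsilon> N (Suc n) i w)) (nonlin A \<delta> f \<theta> \<mu>0 (Suc n))
    \<le> W1 (emp N (\<lambda>i. aux A \<delta> f \<theta> \<mu>0 X0 \<epsilon> N (Suc n) i w)) (nonlin A \<delta> f \<theta> \<mu>0 (Suc n))
      + ennreal (\<delta> * M) * (\<Sum>k\<le>n. ennreal ((exp (- \<omega>) + 2 * \<delta> * M) ^ (n - k))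
          * W1 (emp N (\<lambda>i. aux A \<delta> f \<theta> \<mu>0 X0 \<epsilon> N k i w)) (nonlin A \<delta> f \<theta> \<mu>0 k))"
proof -
  have M: "M > 0" using A6_i(1) by simp
  have "AE w in P. \<forall>k. \<forall>i\<in>{1..N}. Dlip f (\<epsilon> i (Suc k) w) \<le> ennreal M"
    using eps_meas eps_law A6_i(2) by (rule AE_noise_property)
  then show ?thesis
    by (rule eventually_mono) (rule particle_W1_pathwise[OF N delta M A3(2)])
qed

end
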